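(* Let $(\phi_1,\dots,\phi_N)\in\mathcal{U}$ be an arbitrary $N$-tuple of admissible stationary strategies and let $x\in\mathbb{V}$. Assume hypotheses H1, H2, H3 hold and that there exists $L_s>0$ with $|\phi_i(x_1)-\phi_i(x_2)|\le L_s|x_1-x_2|$, $i=1,\dots,N$. Assume that either $\rho>L$, with $L=L_g(1+NL_s)$, and $g$ is bounded, or $\rho>L+K$, where $K\ge0$ is a constant such that $|g(y,u_i,u_{-i})|\le K(1+|y|)$ for all arguments (such $K$ exists by H1). Then there exist a positive constant $C$ and $h_0>0$ such that for all $h\le h_0$ $$\bigl|W_{i,h}(\phi_i,\phi_{-i},x)-W_i(\phi_i,\phi_{-i},x)\bigr|\le C h,\quad i=1,\dots,N.$$
   Context: Setting: an $N$-player infinite-horizon differential game. Player $i$ maximizes over own control $u_i$ $$W_i(u_i,u_{-i},x_0)=\int_0^\infty f_i(x,u_i,u_{-i})e^{-\rho t}\,\mathrm{d}t$$ subject to $\dot x=g(x,u_i,u_{-i})$, $x(0)=x_0$, where $f_i:\mathbb{V}\times\mathbb{U}_1\times\dots\times\mathbb{U}_N\to\mathbb{R}$, $g:\mathbb{V}\times\mathbb{U}_1\times\dots\times\mathbb{U}_N\to\mathbb{R}^n$ are continuous, $\mathbb{V}\subset\mathbb{R}^n$, $\mathbb{U}_i\subset\mathbb{R}^m$, $\rho>0$, and $u_{-i}=[u_1,\dots,u_{i-1},u_{i+1},\dots,u_N]$. $\mathcal{U}=\mathcal{U}_1\times\dots\times\mathcal{U}_N$ is the set of admissible stationary Markovian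 strategies: each $\mathcal{U}_i$ is a set of measurable functions $\phi_i:\mathbb{V}\to\mathbb{U}_i$ such that for every $(\phi_1,\dots,\phi_N)\in\mathcal{U}$ and every $x_0\in\mathbb{V}$ the state equation with $u_i=\phi_i(x(t))$ has a unique absolutely continuous solution $x(t)\in\mathbb{V}$ for all $t\ge0$. $W_i(\phi_i,\phi_{-i},x)$ denotes the payoff when the strategies are used from initial state $x$. Discrete-time game: for $h>0$, $t_n=nh$, $\beta_h=1-\rho h$, player $i$ maximizes $$W_{i,h}(\boldsymbol{u}_i,\boldsymbol{u}_{-i},x_0)=h\sum_{n=0}^\infty \beta_h^n f_i(x_n,u_{i,n},u_{-i,n})$$ subject to $x_{n+1}=x_n+hg(x_n,u_{i,n},u_{-i,n})$. It is assumed that for every $x_0\in\mathbb{V}$ and every $(\psi_1,\dots,\psi_N)\in\mathcal{U}$ this recursion with $u_{j,n}=\psi_j(x_n)$ is well defined with $x_n\in\mathbb{V}$ for all $n$; $W_{i,h}(\psi_i,\psi_{-i},x_0)$ denotes the corresponding discrete payoff. Hypotheses: H1: there is $L_g$ with $|g(x,u_1,\dots,u_N)-g(y,v_1,\dots,v_N)|\le L_g(|x-y|+\sum_{j=1}^N|u_j-v_j|)$ for all arguments. H2: there are $L_i$ with $|f_i(x,u_1,\dots,u_N)-f_i(y,v_1,\dots,v_N)|\le L_i(|x-y|+\sum_{j=1}^N|u_j-v_j|)$. H3: there is $M$ with $|f_i(x,u_1,\dots,u_N)|\le M$ for all arguments. *)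

theory Defs
  imports "HOL-Analysis.Analysis"
begin

text \<open>Players are indexed by 0..<N. A control profile is a function nat => 'u,
  only the components j < N matter.\<close>

definition profile :: "(nat \<Rightarrow> 'v \<Rightarrow> 'u) \<Rightarrow> 'v \<Rightarrow> nat \<Rightarrow> 'u" where
  "profile phi y = (\<lambda>j. phi j y)"

text \<open>Absolutely continuous solution on [0,oo) of x' = g(x, phi(x)), x(0) = x0, staying in V,
  expressed as the integral equation with a (locally) Lebesgue integrable integrand.\<close>
definition is_solution ::
  "'v::euclidean_space set \<Rightarrow> ('v \<Rightarrow> (nat \<Rightarrow> 'u) \<Rightarrow> 'v) \<Rightarrow> (nat \<Rightarrow> 'v \<Rightarrow> 'u)
    \<Rightarrow> 'v \<Rightarrow> (real \<Rightarrow> 'v) \<Rightarrow> bool" where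
  "is_solution V g phi x0 x \<longleftrightarrow>
     (\<forall>t\<ge>0. x t \<in> V
        \<and> (\<lambda>s. g (x s) (profile phi (x s))) absolutely_integrable_on {0..t}
        \<and> x t = x0 + integral {0..t} (\<lambda>s. g (x s) (profile phi (x s))))"

definition has_unique_solution ::
  "'v::euclidean_space set \<Rightarrow> ('v \<Rightarrow> (nat \<Rightarrow> 'u) \<Rightarrow> 'v) \<Rightarrow> (nat \<Rightarrow> 'v \<Rightarrow> 'u)
    \<Rightarrow> 'v \<Rightarrow> bool" where
  "has_unique_solution V g phi x0 \<longleftrightarrow>
     (\<exists>x. is_solution V g phi x0 x \<and>
        (\<forall>y. is_solution V g phi x0 y \<longrightarrow> (\<forall>t\<ge>0. y t = x t)))"

definition traj ::
  "'v::euclidean_space set \<Rightarrow> ('v \<Rightarrow> (nat \<Rightarrow> 'u) \<Rightarrow> 'v) \<Rightarrow> (nat \<Rightarrow> 'v \<Rightarrow> 'u)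
    \<Rightarrow> 'v \<Rightarrow> real \<Rightarrow> 'v" where
  "traj V g phi x0 = (SOME x. is_solution V g phi x0 x)"

definition W ::
  "'v::euclidean_space set \<Rightarrow> ('v \<Rightarrow> (nat \<Rightarrow> 'u) \<Rightarrow> 'v) \<Rightarrow> (nat \<Rightarrow> 'v \<Rightarrow> (nat \<Rightarrow> 'u) \<Rightarrow> real)
    \<Rightarrow> real \<Rightarrow> (nat \<Rightarrow> 'v \<Rightarrow> 'u) \<Rightarrow> nat \<Rightarrow> 'v \<Rightarrow> real" where
  "W V g f \<rho> phi i x0 =
     integral {0..} (\<lambda>t. f i (traj V g phi x0 t) (profile phi (traj V g phi x0 t)) * exp (- \<rho> * t))"

fun disc_traj :: "('v::real_vector \<Rightarrow> (nat \<Rightarrow> 'u) \<Rightarrow> 'v) \<Rightarrow> (nat \<Rightarrow> 'v \<Rightarrow> 'u)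
    \<Rightarrow> real \<Rightarrow> 'v \<Rightarrow> nat \<Rightarrow> 'v" where
  "disc_traj g phi h x0 0 = x0"
| "disc_traj g phi h x0 (Suc n) =
     disc_traj g phi h x0 n + h *\<^sub>R g (disc_traj g phi h x0 n) (profile phi (disc_traj g phi h x0 n))"

definition W_disc ::
  "('v::real_vector \<Rightarrow> (nat \<Rightarrow> 'u) \<Rightarrow> 'v) \<Rightarrow> (nat \<Rightarrow> 'v \<Rightarrow> (nat \<Rightarrow> 'u) \<Rightarrow> real)
    \<Rightarrow> real \<Rightarrow> real \<Rightarrow> (nat \<Rightarrow> 'v \<Rightarrow> 'u) \<Rightarrow> nat \<Rightarrow> 'v \<Rightarrow> real" where
  "W_disc g f \<rho> h phi i x0 =
     h * (\<Sum>n. (1 - \<rho> * h) ^ n * f i (disc_traj g phi h x0 n) (profile phi (disc_traj g phi h x0 n)))"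

end

theory Submission
  imports Defs
begin

(* Write G y = g(y, phi(y)) for the closed-loop drift, which is Lipschitz with constant
   L = Lg (1 + N Ls) and grows at most like A + K |y|. One Euler step commits an error
   O(h^2 |G(x_k)|) and propagates the previous error by a factor 1 + hL + O(h^2), while
   |G(x_k)| grows at most like exp(K h k); hence |x(kh) - x_k| = O(h exp((L + K + 2 delta) h k))
   for any delta > 0 once h is small. Likewise (1 - rho h)^k differs from exp(-rho t) by
   O(h exp(-rho h k / 2)) on [kh, (k+1)h]. As rho > L + K, the discount beats both errors:
   the summand of W_{i,h} and the integrand of W_i differ by O(h exp(-mu h k)) on the k-th
   step interval for some mu > 0, and summing this geometric series gives an O(h) bound. *)

lemma ode_local_bounds:
  fixes X :: "real \<Rightarrow> 'v::real_normed_vector"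
  assumes L: "0 \<le> L" and hL: "h * L \<le> 1/2" and h: "0 < h"
    and lip: "\<And>a b. a \<in> V \<Longrightarrow> b \<in> V \<Longrightarrow> norm (G a - G b) \<le> L * norm (a - b)"
    and XV: "\<And>s. s \<in> {t0..t0+h} \<Longrightarrow> X s \<in> V"
    and der: "\<And>s. s \<in> {t0..t0+h} \<Longrightarrow> (X has_vector_derivative G (X s)) (at s within {t0..t0+h})"
  shows "\<forall>s\<in>{t0..t0+h}. norm (X s - X t0) \<le> 2 * h * norm (G (X t0))"
    and "norm (X (t0 + h) - X t0 - h *\<^sub>R G (X t0)) \<le> 2 * h^2 * L * norm (G (X t0))"
proof -
  let ?S = "{t0..t0+h}"
  have t0S: "t0 \<in> ?S" and t1S: "t0 + h \<in> ?S" using h by auto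
  have "continuous_on ?S X"
    using der has_vector_derivative_continuous continuous_on_eq_continuous_within by blast
  then have "continuous_on ?S (\<lambda>s. norm (X s - X t0))"
    by (intro continuous_intros)
  then obtain r where "r \<in> ?S" and r_max: "\<And>s. s \<in> ?S \<Longrightarrow> norm (X s - X t0) \<le> norm (X r - X t0)"
    using continuous_attains_sup[of ?S "\<lambda>s. norm (X s - X t0)"] t0S by fastforce
  define m where "m = norm (X r - X t0)"
  have lin: "norm (X s - X t0 - (s - t0) *\<^sub>R G (X t0)) \<le> (s - t0) * (L * m)" if s: "s \<in> ?S" for s
  proof -
    have "norm (X s - X t0 - (s - t0) *\<^sub>R G (X t0)) \<le> norm (s - t0) * (L * m)"
    proof (rule vector_differentiable_bound_linearization[where S = ?S and f' = "\<lambda>s. G (X s)"])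
      show "closed_segment t0 s \<subseteq> ?S" using s t0S by (auto simp: closed_segment_eq_real_ivl)
      fix u assume u: "u \<in> ?S"
      have "norm (G (X u) - G (X t0)) \<le> L * norm (X u - X t0)" using lip XV u t0S by blast
      also have "\<dots> \<le> L * m" using r_max[OF u] L unfolding m_def by (simp add: mult_left_mono)
      finally show "norm (G (X u) - G (X t0)) \<le> L * m" .
    qed (use der t0S in auto)
    then show ?thesis using s by simp
  qed
  \<comment> \<open>The maximal displacement \<open>m\<close> satisfies \<open>m \<le> h (|G (X t0)| + L m)\<close>;
    as \<open>h L \<le> 1/2\<close>, the term \<open>h L m\<close> is absorbed.\<close>
  have "m \<le> h * (norm (G (X t0)) + L * m)"
  proof -
    have "m \<le> norm (X r - X t0 - (r - t0) *\<^sub>R G (X t0)) + norm ((r - t0) *\<^sub>R G (X t0))"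
      unfolding m_def by (metis norm_triangle_ineq diff_add_cancel)
    also have "\<dots> \<le> (r - t0) * (L * m) + (r - t0) * norm (G (X t0))"
      using lin[OF \<open>r \<in> ?S\<close>] \<open>r \<in> ?S\<close> by simp
    also have "\<dots> \<le> h * (L * m) + h * norm (G (X t0))"
      using \<open>r \<in> ?S\<close> L by (intro add_mono mult_right_mono) (auto simp: m_def)
    finally show ?thesis by (simp add: algebra_simps)
  qed
  then have "m * (1 - h * L) \<le> h * norm (G (X t0))" by (simp add: algebra_simps)
  moreover have "m * (1/2) \<le> m * (1 - h * L)" using hL by (intro mult_left_mono) (auto simp: m_def)
  ultimately have m_le: "m \<le> 2 * h * norm (G (X t0))" by linarith
  show "\<forall>s\<in>?S. norm (X s - X t0) \<le> 2 * h * norm (G (X t0))"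
    using r_max m_le unfolding m_def by (meson order_trans)
  have "norm (X (t0 + h) - X t0 - h *\<^sub>R G (X t0)) \<le> h * (L * m)"
    using lin[OF t1S] by simp
  also have "\<dots> \<le> h * (L * (2 * h * norm (G (X t0))))"
    using m_le h L by (intro mult_left_mono) auto
  finally show "norm (X (t0 + h) - X t0 - h *\<^sub>R G (X t0)) \<le> 2 * h^2 * L * norm (G (X t0))"
    by (simp add: power2_eq_square algebra_simps)
qed

lemma euler_step_error:
  fixes X :: "real \<Rightarrow> 'v::real_normed_vector"
  assumes L: "0 \<le> L" and hL: "h * L \<le> 1/2" and h: "0 < h"
    and lip: "\<And>a b. a \<in> V \<Longrightarrow> b \<in> V \<Longrightarrow> norm (G a - G b) \<le> L * norm (a - b)"
    and XV: "\<And>s. s \<in> {t0..t0+h} \<Longrightarrow> X s \<in> V"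
    and der: "\<And>s. s \<in> {t0..t0+h} \<Longrightarrow> (X has_vector_derivative G (X s)) (at s within {t0..t0+h})"
    and y: "y \<in> V"
  shows "norm (X (t0 + h) - (y + h *\<^sub>R G y))
    \<le> (1 + h * L + 2 * h^2 * L^2) * norm (X t0 - y) + 2 * h^2 * L * norm (G y)"
proof -
  define e where "e = norm (X t0 - y)"
  have Xt0: "X t0 \<in> V" using XV h by simp
  have G_lip: "norm (G (X t0) - G y) \<le> L * e" using lip[OF Xt0 y] by (simp add: e_def)
  then have G_le: "norm (G (X t0)) \<le> norm (G y) + L * e"
    using norm_triangle_sub[of "G (X t0)" "G y"] by linarith
  have "X (t0 + h) - (y + h *\<^sub>R G y)
      = (X t0 - y) + (X (t0 + h) - X t0 - h *\<^sub>R G (X t0)) + h *\<^sub>R (G (X t0) - G y)"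
    by (simp add: algebra_simps)
  then have "norm (X (t0 + h) - (y + h *\<^sub>R G y))
      \<le> e + norm (X (t0 + h) - X t0 - h *\<^sub>R G (X t0)) + h * norm (G (X t0) - G y)"
    using h unfolding e_def by (metis norm_triangle_ineq add_right_mono order_trans norm_scaleR abs_of_pos)
  also have "\<dots> \<le> e + 2 * h^2 * L * (norm (G y) + L * e) + h * (L * e)"
  proof (intro add_mono order_refl)
    have "norm (X (t0 + h) - X t0 - h *\<^sub>R G (X t0)) \<le> 2 * h^2 * L * norm (G (X t0))"
      by (rule ode_local_bounds(2)[OF L hL h lip XV der])
    also have "\<dots> \<le> 2 * h^2 * L * (norm (G y) + L * e)"
      using G_le h L by (intro mult_left_mono) auto
    finally show "norm (X (t0 + h) - X t0 - h *\<^sub>R G (X t0)) \<le> 2 * h^2 * L * (norm (G y) + L * e)" .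
    show "h * norm (G (X t0) - G y) \<le> h * (L * e)" using G_lip h by simp
  qed
  also have "\<dots> = (1 + h * L + 2 * h^2 * L^2) * e + 2 * h^2 * L * norm (G y)"
    by (simp add: algebra_simps power2_eq_square)
  finally show ?thesis unfolding e_def .
qed

lemma euler_growth_bound:
  fixes xd :: "nat \<Rightarrow> 'v::real_normed_vector"
  assumes K: "0 \<le> K" and h: "0 < h"
    and growth: "\<And>y. y \<in> V \<Longrightarrow> norm (G y) \<le> A + K * norm y"
    and step: "\<And>k. xd (Suc k) = xd k + h *\<^sub>R G (xd k)"
    and xdV: "\<And>k. xd k \<in> V"
  shows "A + K * norm (xd k) \<le> (A + K * norm (xd 0)) * exp (K * h * real k)"
proof (induction k)
  case 0
  then show ?case by simp
next
  case (Suc k)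
  have "norm (xd (Suc k)) \<le> norm (xd k) + h * norm (G (xd k))"
    using step[of k] h norm_triangle_ineq[of "xd k" "h *\<^sub>R G (xd k)"] by simp
  also have "\<dots> \<le> norm (xd k) + h * (A + K * norm (xd k))"
    using growth[OF xdV] h by (simp add: mult_left_mono)
  finally have "A + K * norm (xd (Suc k)) \<le> A + K * (norm (xd k) + h * (A + K * norm (xd k)))"
    using K by (simp add: mult_left_mono)
  also have "\<dots> = (1 + K * h) * (A + K * norm (xd k))"
    by (simp add: algebra_simps)
  also have "\<dots> \<le> exp (K * h) * ((A + K * norm (xd 0)) * exp (K * h * real k))"
  proof (rule mult_mono)
    show "0 \<le> A + K * norm (xd k)"
      using growth[OF xdV[of k]] norm_ge_zero[of "G (xd k)"] by linarith
  qed (use Suc.IH exp_ge_add_one_self in auto)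
  also have "\<dots> = (A + K * norm (xd 0)) * exp (K * h * real (Suc k))"
    by (simp add: algebra_simps exp_add[symmetric])
  finally show ?case .
qed

lemma euler_global_error:
  fixes X :: "real \<Rightarrow> 'v::real_normed_vector" and xd :: "nat \<Rightarrow> 'v"
  assumes L: "0 \<le> L" and K: "0 \<le> K" and \<delta>: "0 < \<delta>" and h: "0 < h"
    and hL: "h * L \<le> 1/2" and hL2: "2 * h * L^2 \<le> \<delta>"
    and lip: "\<And>a b. a \<in> V \<Longrightarrow> b \<in> V \<Longrightarrow> norm (G a - G b) \<le> L * norm (a - b)"
    and growth: "\<And>y. y \<in> V \<Longrightarrow> norm (G y) \<le> A + K * norm y"
    and XV: "\<And>s. 0 \<le> s \<Longrightarrow> X s \<in> V"
    and der: "\<And>s. 0 \<le> s \<Longrightarrow> (X has_vector_derivative G (X s)) (at s within {0..})"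
    and X0: "X 0 = xd 0"
    and step: "\<And>k. xd (Suc k) = xd k + h *\<^sub>R G (xd k)"
    and xdV: "\<And>k. xd k \<in> V"
  shows "norm (X (real k * h) - xd k)
    \<le> 2 * L * (A + K * norm (xd 0)) / \<delta> * h * exp ((L + K + 2 * \<delta>) * h * real k)"
proof (induction k)
  case 0
  have "0 \<le> A + K * norm (xd 0)"
    using growth[OF xdV[of 0]] norm_ge_zero[of "G (xd 0)"] by linarith
  then show ?case using X0 L \<delta> h by simp
next
  case (Suc k)
  define D where "D = 2 * L * (A + K * norm (xd 0)) / \<delta>"
  define P where "P = exp ((L + K + 2 * \<delta>) * h * real k)"
  define t0 where "t0 = real k * h"
  have t0: "0 \<le> t0" using h by (simp add: t0_def)
  have "norm (X (t0 + h) - (xd k + h *\<^sub>R G (xd k)))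
      \<le> (1 + h * L + 2 * h^2 * L^2) * norm (X t0 - xd k) + 2 * h^2 * L * norm (G (xd k))"
  proof (rule euler_step_error[where V = V and G = G])
    fix s assume s: "s \<in> {t0..t0+h}"
    show "X s \<in> V" using XV s t0 by auto
    show "(X has_vector_derivative G (X s)) (at s within {t0..t0+h})"
      using s t0 by (intro has_vector_derivative_within_subset[OF der]) auto
  qed (use L hL h lip xdV in auto)
  then have err_step: "norm (X (real (Suc k) * h) - xd (Suc k))
      \<le> (1 + h * L + 2 * h^2 * L^2) * norm (X t0 - xd k) + 2 * h^2 * L * norm (G (xd k))"
    by (simp add: step t0_def algebra_simps)
  have w0: "0 \<le> A + K * norm (xd 0)"
    using growth[OF xdV[of 0]] norm_ge_zero[of "G (xd 0)"] by linarith
  have "A + K * norm (xd k) \<le> (A + K * norm (xd 0)) * exp (K * h * real k)"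
    by (rule euler_growth_bound[where V = V and G = G]) (use K h growth step xdV in auto)
  then have "norm (G (xd k)) \<le> (A + K * norm (xd 0)) * exp (K * h * real k)"
    using growth[OF xdV[of k]] by linarith
  also have "\<dots> \<le> (A + K * norm (xd 0)) * P"
    unfolding P_def using w0 L \<delta> h by (intro mult_left_mono) (auto intro!: mult_right_mono)
  finally have G_le: "2 * h^2 * L * norm (G (xd k)) \<le> \<delta> * h * (D * h * P)"
    using h L \<delta> unfolding D_def by (auto simp: power2_eq_square intro: order_trans[OF mult_left_mono])
  \<comment> \<open>By the choice of \<open>D\<close>, the extra \<open>\<delta> h\<close> pays for the local error
    \<open>2 h\<^sup>2 L |G (xd k)|\<close>.\<close>
  have factor: "1 + h * L + 2 * h^2 * L^2 + \<delta> * h \<le> exp ((L + K + 2 * \<delta>) * h)"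
  proof -
    have "2 * h^2 * L^2 \<le> \<delta> * h" using mult_left_mono[OF hL2, of h] h by (simp add: power2_eq_square algebra_simps)
    then have "1 + h * L + 2 * h^2 * L^2 + \<delta> * h \<le> 1 + (L + K + 2 * \<delta>) * h"
      using mult_nonneg_nonneg[OF K, of h] h by (simp add: algebra_simps)
    also have "\<dots> \<le> exp ((L + K + 2 * \<delta>) * h)" by (rule exp_ge_add_one_self)
    finally show ?thesis .
  qed
  have IH: "norm (X t0 - xd k) \<le> D * h * P"
    using Suc.IH unfolding D_def P_def t0_def .
  have DhP: "0 \<le> D * h * P"
    using order_trans[OF norm_ge_zero IH] .
  have "norm (X (real (Suc k) * h) - xd (Suc k))
      \<le> (1 + h * L + 2 * h^2 * L^2) * (D * h * P) + \<delta> * h * (D * h * P)"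
    using h L by (intro order_trans[OF err_step add_mono[OF mult_left_mono[OF IH] G_le]]) auto
  also have "\<dots> \<le> exp ((L + K + 2 * \<delta>) * h) * (D * h * P)"
    using mult_right_mono[OF factor DhP] by (simp add: algebra_simps)
  also have "\<dots> = D * h * exp ((L + K + 2 * \<delta>) * h * real (Suc k))"
    by (simp add: P_def algebra_simps exp_add[symmetric])
  finally show ?case unfolding D_def .
qed

lemma euler_tracking_error:
  fixes X :: "real \<Rightarrow> 'v::real_normed_vector" and xd :: "nat \<Rightarrow> 'v"
  assumes L: "0 \<le> L" and K: "0 \<le> K" and \<delta>: "0 < \<delta>" and h: "0 < h" "h \<le> 1"
    and hL: "h * L \<le> 1/2" and hL2: "2 * h * L^2 \<le> \<delta>"
    and lip: "\<And>a b. a \<in> V \<Longrightarrow> b \<in> V \<Longrightarrow> norm (G a - G b) \<le> L * norm (a - b)"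
    and growth: "\<And>y. y \<in> V \<Longrightarrow> norm (G y) \<le> A + K * norm y"
    and XV: "\<And>s. 0 \<le> s \<Longrightarrow> X s \<in> V"
    and der: "\<And>s. 0 \<le> s \<Longrightarrow> (X has_vector_derivative G (X s)) (at s within {0..})"
    and X0: "X 0 = xd 0"
    and step: "\<And>k. xd (Suc k) = xd k + h *\<^sub>R G (xd k)"
    and xdV: "\<And>k. xd k \<in> V"
    and t: "t \<in> {real k * h..real k * h + h}"
  shows "norm (X t - xd k)
    \<le> 2 * (A + K * norm (xd 0)) * (1 + L * (1 + 2 * L) / \<delta>) * h * exp ((L + K + 2 * \<delta>) * h * real k)"
proof -
  define w where "w = A + K * norm (xd 0)"
  define D where "D = 2 * L * w / \<delta>"
  define P where "P = exp ((L + K + 2 * \<delta>) * h * real k)"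
  define t0 where "t0 = real k * h"
  have t0: "0 \<le> t0" using h by (simp add: t0_def)
  have w: "0 \<le> w"
    using growth[OF xdV[of 0]] norm_ge_zero[of "G (xd 0)"] unfolding w_def by linarith
  have P: "1 \<le> P" unfolding P_def using L K \<delta> h by simp
  have e: "norm (X t0 - xd k) \<le> D * h * P"
    unfolding t0_def D_def w_def P_def
    by (rule euler_global_error[where V = V and G = G]) (use assms in auto)
  have "A + K * norm (xd k) \<le> w * exp (K * h * real k)"
    unfolding w_def by (rule euler_growth_bound[where V = V and G = G]) (use K h growth step xdV in auto)
  also have "\<dots> \<le> w * P"
    unfolding P_def using w L \<delta> h by (intro mult_left_mono) (auto intro!: mult_right_mono)
  finally have G_le: "norm (G (xd k)) \<le> w * P"
    using growth[OF xdV[of k]] by linarith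
  have "\<forall>s\<in>{t0..t0+h}. norm (X s - X t0) \<le> 2 * h * norm (G (X t0))"
  proof (rule ode_local_bounds(1)[where V = V and G = G])
    fix s assume s: "s \<in> {t0..t0+h}"
    show "X s \<in> V" using XV s t0 by auto
    show "(X has_vector_derivative G (X s)) (at s within {t0..t0+h})"
      using s t0 by (intro has_vector_derivative_within_subset[OF der]) auto
  qed (use L hL h lip in auto)
  then have "norm (X t - X t0) \<le> 2 * h * norm (G (X t0))"
    using t by (simp add: t0_def)
  also have "\<dots> \<le> 2 * h * (norm (G (xd k)) + L * norm (X t0 - xd k))"
    using lip[OF XV[OF t0] xdV[of k]] norm_triangle_sub[of "G (X t0)" "G (xd k)"] h by simp
  also have "\<dots> \<le> 2 * h * (w * P + L * (D * h * P))"
    using G_le e h L by (intro mult_left_mono add_mono) auto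
  also have "\<dots> \<le> 2 * h * (w * P + L * (D * P))"
  proof -
    have "0 \<le> D" unfolding D_def using L w \<delta> by simp
    then have "D * h * P \<le> D * P" using h P by (intro mult_right_mono mult_left_le) auto
    then show ?thesis using h L w by (intro mult_left_mono add_mono) auto
  qed
  finally have "norm (X t - xd k) \<le> D * h * P + 2 * h * (w * P + L * (D * P))"
    using e norm_triangle_sub[of "X t - xd k" "X t0 - xd k"] by (simp add: algebra_simps)
  also have "\<dots> = 2 * w * (1 + L * (1 + 2 * L) / \<delta>) * h * P"
    using \<delta> by (simp add: D_def field_simps)
  finally show ?thesis unfolding w_def P_def .
qed

lemma mult_exp_neg_le_exp_neg_half:
  fixes z :: real
  assumes "0 \<le> z"
  shows "z * exp (- z) \<le> exp (- z / 2)"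
proof -
  have "(1 + z/4)^2 \<le> exp (z/4)^2"
    using assms exp_ge_add_one_self[of "z/4"] by (intro power_mono) auto
  also have "\<dots> = exp (z/2)" by (simp add: power2_eq_square exp_add[symmetric])
  finally have "z \<le> exp (z/2)"
    using zero_le_power2[of "1 - z/4"] by (simp add: power2_eq_square algebra_simps)
  then have "z * exp (- z) \<le> exp (z/2) * exp (- z)" by (simp add: mult_right_mono)
  also have "\<dots> = exp (- z / 2)" by (simp add: exp_add[symmetric])
  finally show ?thesis .
qed

lemma one_minus_power_exp_error:
  fixes y :: real
  assumes y0: "0 \<le> y" and y1: "y \<le> 1/2"
  shows "\<bar>(1 - y)^k - exp (- y * real k)\<bar> \<le> 2 * y * exp (- y * real k / 2)"
proof -
  have "(1 - y)^k \<le> exp (- y)^k"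
    using y1 exp_ge_add_one_self[of "- y"] by (intro power_mono) auto
  then have upper: "(1 - y)^k \<le> exp (- y * real k)"
    by (simp add: exp_of_nat_mult[symmetric] algebra_simps)
  have "exp (- y - 2 * y^2) \<le> exp (ln (1 - y))"
    using ln_one_minus_pos_lower_bound[OF y0 y1] by simp
  also have "\<dots> = 1 - y" using y1 by simp
  finally have "exp (- y - 2 * y^2) \<le> 1 - y" .
  then have "exp (- y - 2 * y^2)^k \<le> (1 - y)^k" by (intro power_mono) auto
  then have "exp (- y * real k) * exp (- 2 * y^2 * real k) \<le> (1 - y)^k"
    by (simp add: exp_of_nat_mult[symmetric] exp_add[symmetric] algebra_simps)
  moreover have "exp (- y * real k) * (1 - 2 * y^2 * real k) \<le> exp (- y * real k) * exp (- 2 * y^2 * real k)"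
    using exp_ge_add_one_self[of "- 2 * y^2 * real k"] by (intro mult_left_mono) auto
  ultimately have "exp (- y * real k) - (1 - y)^k \<le> 2 * y * ((y * real k) * exp (- (y * real k)))"
    by (simp add: algebra_simps power2_eq_square)
  also have "\<dots> \<le> 2 * y * exp (- (y * real k) / 2)"
    using mult_exp_neg_le_exp_neg_half[of "y * real k"] y0 by (intro mult_left_mono) auto
  finally show ?thesis using upper by (simp add: abs_if)
qed

lemma exp_neg_diff_le:
  fixes \<rho> s t :: real
  assumes "0 \<le> \<rho>" "s \<le> t"
  shows "\<bar>exp (- \<rho> * s) - exp (- \<rho> * t)\<bar> \<le> \<rho> * (t - s) * exp (- \<rho> * s)"
proof -
  define u where "u = \<rho> * (t - s)"
  have "0 \<le> u" using assms by (simp add: u_def)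
  have "exp (- \<rho> * s) - exp (- \<rho> * t) = exp (- \<rho> * s) * (1 - exp (- u))"
    by (simp add: u_def exp_add[symmetric] algebra_simps)
  moreover have "0 \<le> 1 - exp (- u)" "1 - exp (- u) \<le> u"
    using exp_ge_add_one_self[of "- u"] \<open>0 \<le> u\<close> by auto
  ultimately show ?thesis
    by (simp add: u_def mult_left_mono mult.commute)
qed

lemma discount_factor_error:
  fixes \<rho> h t :: real
  assumes \<rho>: "0 < \<rho>" and \<rho>h: "\<rho> * h \<le> 1/2" and t: "t \<in> {real k * h..real k * h + h}"
  shows "\<bar>(1 - \<rho> * h)^k - exp (- \<rho> * t)\<bar> \<le> 3 * \<rho> * h * exp (- \<rho> * h * real k / 2)"
proof -
  have h: "0 \<le> h" using t by simp
  define E where "E = exp (- \<rho> * h * real k / 2)"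
  have "\<bar>(1 - \<rho> * h)^k - exp (- \<rho> * h * real k)\<bar> \<le> 2 * (\<rho> * h) * E"
    unfolding E_def using \<rho> h \<rho>h
    by (intro one_minus_power_exp_error[of "\<rho> * h", unfolded minus_mult_left]) auto
  moreover have "\<bar>exp (- \<rho> * (real k * h)) - exp (- \<rho> * t)\<bar> \<le> \<rho> * h * E"
  proof -
    have "\<bar>exp (- \<rho> * (real k * h)) - exp (- \<rho> * t)\<bar> \<le> \<rho> * (t - real k * h) * exp (- \<rho> * (real k * h))"
      using \<rho> t by (intro exp_neg_diff_le) auto
    also have "\<dots> \<le> \<rho> * h * E"
      unfolding E_def using \<rho> h t by (intro mult_mono) (auto simp: algebra_simps)
    finally show ?thesis .
  qed
  moreover have "exp (- \<rho> * h * real k) = exp (- \<rho> * (real k * h))"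
    by (simp add: algebra_simps)
  ultimately show ?thesis unfolding E_def by linarith
qed

lemma discounted_integrand_error:
  fixes a b M B \<rho> h \<mu> \<gamma> t :: real
  assumes \<rho>: "0 < \<rho>" and h: "0 < h" and \<rho>h: "\<rho> * h \<le> 1/2" and \<mu>: "\<mu> \<le> \<rho> / 2" "\<gamma> + \<mu> \<le> \<rho>"
    and a: "\<bar>a\<bar> \<le> M" and ab: "\<bar>a - b\<bar> \<le> B * h * exp (\<gamma> * h * real k)"
    and t: "t \<in> {real k * h..real k * h + h}"
  shows "\<bar>(1 - \<rho> * h)^k * a - b * exp (- \<rho> * t)\<bar> \<le> (3 * \<rho> * M + B) * h * exp (- \<mu> * h * real k)"
proof -
  define r where "r = exp (- \<mu> * h * real k)"
  have hk: "0 \<le> h * real k" using h by simp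
  have "\<bar>(1 - \<rho> * h)^k - exp (- \<rho> * t)\<bar> \<le> 3 * \<rho> * h * exp (- \<rho> * h * real k / 2)"
    using \<rho> \<rho>h t by (rule discount_factor_error)
  also have "\<dots> \<le> 3 * \<rho> * h * r"
    unfolding r_def using \<rho> h mult_right_mono[OF \<mu>(1) hk] by (simp add: algebra_simps)
  finally have discount: "\<bar>((1 - \<rho> * h)^k - exp (- \<rho> * t)) * a\<bar> \<le> 3 * \<rho> * h * r * M"
    unfolding abs_mult using a by (intro mult_mono) (auto simp: r_def)
  have "exp (- \<rho> * t) * exp (\<gamma> * h * real k) \<le> exp (- \<rho> * (real k * h)) * exp (\<gamma> * h * real k)"
    using \<rho> t by simp
  also have "\<dots> \<le> r"
    unfolding r_def mult_exp_exp using mult_right_mono[OF \<mu>(2) hk] by (simp add: algebra_simps)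
  finally have decay: "exp (- \<rho> * t) * exp (\<gamma> * h * real k) \<le> r" .
  have "0 \<le> B * h" using order_trans[OF abs_ge_zero ab] by (simp add: zero_le_mult_iff)
  have "\<bar>exp (- \<rho> * t) * (a - b)\<bar> \<le> exp (- \<rho> * t) * (B * h * exp (\<gamma> * h * real k))"
    unfolding abs_mult using ab by (simp add: mult_left_mono)
  also have "\<dots> \<le> B * h * r"
    using mult_left_mono[OF decay \<open>0 \<le> B * h\<close>] by (simp add: algebra_simps)
  finally have tracking: "\<bar>exp (- \<rho> * t) * (a - b)\<bar> \<le> B * h * r" .
  have "(1 - \<rho> * h)^k * a - b * exp (- \<rho> * t)
      = ((1 - \<rho> * h)^k - exp (- \<rho> * t)) * a + exp (- \<rho> * t) * (a - b)"
    by (simp add: algebra_simps)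
  then have "\<bar>(1 - \<rho> * h)^k * a - b * exp (- \<rho> * t)\<bar> \<le> 3 * \<rho> * h * r * M + B * h * r"
    using discount tracking by linarith
  then show ?thesis by (simp add: r_def algebra_simps)
qed

lemma integral_atLeastAtMost_tendsto:
  fixes f :: "real \<Rightarrow> real"
  assumes "f absolutely_integrable_on {a..}"
  shows "((\<lambda>b. integral {a..b} f) \<longlongrightarrow> integral {a..} f) at_top"
proof -
  have "((\<lambda>b. set_lebesgue_integral lebesgue {a..b} f) \<longlongrightarrow> set_lebesgue_integral lebesgue {a..} f) at_top"
    by (rule tendsto_set_lebesgue_integral_at_top) (use assms in auto)
  moreover have "f absolutely_integrable_on {a..b}" for b
    using assms by (rule set_integrable_subset) auto
  ultimately show ?thesis
    using assms by (simp add: set_lebesgue_integral_eq_integral)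
qed

lemma series_integral_error:
  fixes \<phi> :: "real \<Rightarrow> real" and a \<epsilon> :: "nat \<Rightarrow> real"
  assumes h: "0 < h" and cont: "continuous_on {0..} \<phi>" and int: "\<phi> absolutely_integrable_on {0..}"
    and a: "summable a" and \<epsilon>: "summable \<epsilon>"
    and close: "\<And>k t. t \<in> {real k * h..real k * h + h} \<Longrightarrow> \<bar>a k - \<phi> t\<bar> \<le> \<epsilon> k"
  shows "\<bar>h * suminf a - integral {0..} \<phi>\<bar> \<le> h * suminf \<epsilon>"
proof -
  have int_on: "\<phi> integrable_on {s..t}" if "0 \<le> s" for s t
    using that by (intro integrable_continuous_interval continuous_on_subset[OF cont]) auto
  have step: "\<bar>h * a k - integral {real k * h..real k * h + h} \<phi>\<bar> \<le> h * \<epsilon> k" for k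
  proof -
    let ?I = "{real k * h..real k * h + h}"
    have "integral ?I (\<lambda>t. a k - \<phi> t) = integral ?I (\<lambda>t. a k) - integral ?I \<phi>"
      using h int_on[of "real k * h"] by (intro integral_diff) auto
    also have "integral ?I (\<lambda>t. a k) = h * a k" using h by simp
    finally have "integral ?I (\<lambda>t. a k - \<phi> t) = h * a k - integral ?I \<phi>" .
    moreover have "norm (integral ?I (\<lambda>t. a k - \<phi> t)) \<le> integral ?I (\<lambda>t. \<epsilon> k)"
      using h int_on[of "real k * h"] close
      by (intro integral_norm_bound_integral) (auto intro: integrable_diff)
    ultimately show ?thesis using h by simp
  qed
  have partial: "\<bar>h * (\<Sum>k<n. a k) - integral {0..real n * h} \<phi>\<bar> \<le> h * (\<Sum>k<n. \<epsilon> k)" for n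
  proof (induction n)
    case (Suc n)
    have "integral {0..real n * h} \<phi> + integral {real n * h..real n * h + h} \<phi>
        = integral {0..real n * h + h} \<phi>"
      by (rule Henstock_Kurzweil_Integration.integral_combine) (use h int_on in auto)
    then have "integral {0..real (Suc n) * h} \<phi>
        = integral {0..real n * h} \<phi> + integral {real n * h..real n * h + h} \<phi>"
      by (simp add: algebra_simps)
    then show ?case
      using Suc.IH step[of n] by (simp add: algebra_simps)
  qed simp
  have "0 \<le> \<epsilon> k" for k
    using order_trans[OF abs_ge_zero close[of "real k * h" k]] h by simp
  then have "(\<Sum>k<n. \<epsilon> k) \<le> suminf \<epsilon>" for n
    using \<epsilon> by (intro sum_le_suminf) auto
  then have bound: "\<bar>h * (\<Sum>k<n. a k) - integral {0..real n * h} \<phi>\<bar> \<le> h * suminf \<epsilon>" for n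
    using partial[of n] h by (meson mult_left_mono order_trans less_imp_le)
  have "filterlim (\<lambda>n. real n * h) at_top sequentially"
    using h by (intro filterlim_at_top_mult_tendsto_pos[OF tendsto_const] filterlim_real_sequentially)
  then have "(\<lambda>n. integral {0..real n * h} \<phi>) \<longlonglongrightarrow> integral {0..} \<phi>"
    using integral_atLeastAtMost_tendsto[OF int] by (rule filterlim_compose[rotated])
  moreover have "(\<lambda>n. \<Sum>k<n. a k) \<longlonglongrightarrow> suminf a"
    using a by (rule summable_LIMSEQ)
  ultimately have "(\<lambda>n. \<bar>h * (\<Sum>k<n. a k) - integral {0..real n * h} \<phi>\<bar>)
      \<longlonglongrightarrow> \<bar>h * suminf a - integral {0..} \<phi>\<bar>"
    by (intro tendsto_intros)
  then show ?thesis
    by (rule LIMSEQ_le_const2) (use bound in auto)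
qed

lemma exp_neg_series_le:
  fixes \<mu> h :: real
  assumes \<mu>: "0 < \<mu>" and h: "0 < h" "h \<le> 1"
  shows "summable (\<lambda>k. exp (- \<mu> * h * real k))"
    and "h * (\<Sum>k. exp (- \<mu> * h * real k)) \<le> exp \<mu> / \<mu>"
proof -
  define q where "q = exp (- \<mu> * h)"
  have q: "0 < q" "q < 1" using \<mu> h by (auto simp: q_def)
  have q_pow: "(\<lambda>k. exp (- \<mu> * h * real k)) = (\<lambda>k. q ^ k)"
    by (simp add: q_def exp_of_nat_mult[symmetric] algebra_simps)
  show "summable (\<lambda>k. exp (- \<mu> * h * real k))"
    unfolding q_pow using q by (intro summable_geometric) auto
  have "(1 + \<mu> * h) * q \<le> exp (\<mu> * h) * q"
    using q exp_ge_add_one_self[of "\<mu> * h"] by simp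
  also have "\<dots> = 1" by (simp add: q_def exp_add[symmetric])
  finally have "\<mu> * h * q \<le> 1 - q" by (simp add: algebra_simps)
  then have "h / (1 - q) \<le> h / (\<mu> * h * q)"
    using q \<mu> h by (intro divide_left_mono) auto
  also have "\<dots> = exp (\<mu> * h) / \<mu>" using h q by (simp add: q_def exp_minus field_simps)
  also have "\<dots> \<le> exp \<mu> / \<mu>" using \<mu> h by (intro divide_right_mono) (auto simp: mult_left_le)
  finally show "h * (\<Sum>k. exp (- \<mu> * h * real k)) \<le> exp \<mu> / \<mu>"
    unfolding q_pow using q by (simp add: suminf_geometric)
qed

lemma euler_fixed_step_payoff_error:
  fixes X :: "real \<Rightarrow> 'v::real_normed_vector" and xd :: "nat \<Rightarrow> 'v" and F :: "'v \<Rightarrow> real"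
  assumes L: "0 \<le> L" and K: "0 \<le> K" and \<delta>: "0 < \<delta>" "L + K + 4 * \<delta> \<le> \<rho>"
    and \<mu>: "0 < \<mu>" "\<mu> \<le> \<rho> / 2" "\<mu> \<le> 2 * \<delta>"
    and h: "0 < h" "h \<le> 1" "h * L \<le> 1/2" "2 * h * L^2 \<le> \<delta>" "\<rho> * h \<le> 1/2"
    and lip: "\<And>a b. a \<in> V \<Longrightarrow> b \<in> V \<Longrightarrow> norm (G a - G b) \<le> L * norm (a - b)"
    and growth: "\<And>y. y \<in> V \<Longrightarrow> norm (G y) \<le> A + K * norm y"
    and XV: "\<And>s. 0 \<le> s \<Longrightarrow> X s \<in> V"
    and der: "\<And>s. 0 \<le> s \<Longrightarrow> (X has_vector_derivative G (X s)) (at s within {0..})"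
    and X0: "X 0 = xd 0"
    and step: "\<And>k. xd (Suc k) = xd k + h *\<^sub>R G (xd k)"
    and xdV: "\<And>k. xd k \<in> V"
    and LF: "0 \<le> LF" and F_lip: "\<And>a b. a \<in> V \<Longrightarrow> b \<in> V \<Longrightarrow> \<bar>F a - F b\<bar> \<le> LF * norm (a - b)"
    and F_bound: "\<And>a. a \<in> V \<Longrightarrow> \<bar>F a\<bar> \<le> M"
  shows "\<bar>h * (\<Sum>k. (1 - \<rho> * h)^k * F (xd k)) - integral {0..} (\<lambda>t. F (X t) * exp (- \<rho> * t))\<bar>
    \<le> (3 * \<rho> * M + LF * (2 * (A + K * norm (xd 0)) * (1 + L * (1 + 2 * L) / \<delta>))) * exp \<mu> / \<mu> * h"
proof -
  define E where "E = 2 * (A + K * norm (xd 0)) * (1 + L * (1 + 2 * L) / \<delta>)"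
  define c where "c = 3 * \<rho> * M + LF * E"
  define \<phi> where "\<phi> = (\<lambda>t. F (X t) * exp (- \<rho> * t))"
  have \<rho>: "0 < \<rho>" using L K \<delta> by linarith
  have close: "\<bar>(1 - \<rho> * h)^k * F (xd k) - \<phi> t\<bar> \<le> c * h * exp (- \<mu> * h * real k)"
    if t: "t \<in> {real k * h..real k * h + h}" for k t
  proof -
    have "0 \<le> real k * h" "real k * h \<le> t" using h t by auto
    then have "X t \<in> V" by (intro XV) linarith
    then have "\<bar>F (xd k) - F (X t)\<bar> \<le> LF * norm (X t - xd k)"
      using F_lip[OF xdV] by (simp add: norm_minus_commute)
    also have "\<dots> \<le> LF * (E * h * exp ((L + K + 2 * \<delta>) * h * real k))"
      unfolding E_def
      using LF euler_tracking_error[where V = V and G = G, OF L K \<delta>(1) h(1-4) lip growth XV der X0 step xdV t]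
      by (simp add: mult_left_mono)
    finally have "\<bar>F (xd k) - F (X t)\<bar> \<le> LF * E * h * exp ((L + K + 2 * \<delta>) * h * real k)"
      by (simp only: mult.assoc)
    with \<rho> h \<delta> \<mu> F_bound[OF xdV] t show ?thesis
      unfolding c_def \<phi>_def by (intro discounted_integrand_error[where \<gamma> = "L + K + 2 * \<delta>"]) auto
  qed
  have c: "0 \<le> c"
    using order_trans[OF abs_ge_zero close[of 0 0]] h by (simp add: zero_le_mult_iff)
  have X_cont: "continuous_on {0..} X"
    by (simp add: continuous_on_eq_continuous_within has_vector_derivative_continuous[OF der])
  have F_cont: "continuous_on V F"
    using F_lip LF by (intro lipschitz_on_continuous_on[of LF] lipschitz_onI) (auto simp: dist_norm)
  have "continuous_on {0..} (\<lambda>t. F (X t))"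
    by (rule continuous_on_compose2[OF F_cont X_cont]) (use XV in auto)
  then have \<phi>_cont: "continuous_on {0..} \<phi>"
    unfolding \<phi>_def by (intro continuous_intros)
  have "(\<lambda>t. M * exp (- \<rho> * t)) integrable_on {0..}"
    using integrable_on_cmult_left[OF integrable_on_exp_minus_to_infinity[OF \<rho>, of 0], of M] by simp
  moreover have "norm (\<phi> t) \<le> M * exp (- \<rho> * t)" if "t \<in> {0..}" for t
    using F_bound[OF XV] that by (simp add: \<phi>_def abs_mult mult_right_mono)
  ultimately have \<phi>_int: "\<phi> absolutely_integrable_on {0..}"
    by (intro measurable_bounded_by_integrable_imp_absolutely_integrable
        continuous_imp_measurable_on_sets_lebesgue[OF \<phi>_cont]) auto
  have "summable (\<lambda>k. M * (1 - \<rho> * h)^k)"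
    using \<rho> h by (intro summable_mult summable_geometric) auto
  moreover have "norm ((1 - \<rho> * h)^k * F (xd k)) \<le> M * (1 - \<rho> * h)^k" for k
    using F_bound[OF xdV] \<rho> h by (simp add: abs_mult mult.commute mult_left_mono)
  ultimately have sum_a: "summable (\<lambda>k. (1 - \<rho> * h)^k * F (xd k))"
    by (rule summable_comparison_test')
  have sum_\<epsilon>: "summable (\<lambda>k. c * h * exp (- \<mu> * h * real k))"
    using exp_neg_series_le(1)[OF \<mu>(1) h(1,2)] by (rule summable_mult)
  have "\<bar>h * (\<Sum>k. (1 - \<rho> * h)^k * F (xd k)) - integral {0..} \<phi>\<bar>
      \<le> h * (\<Sum>k. c * h * exp (- \<mu> * h * real k))"
    using h(1) \<phi>_cont \<phi>_int sum_a sum_\<epsilon> close by (rule series_integral_error)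
  also have "\<dots> = c * (h * (\<Sum>k. exp (- \<mu> * h * real k))) * h"
    using suminf_mult[OF exp_neg_series_le(1)[OF \<mu>(1) h(1,2)], of "c * h"] by (simp add: algebra_simps)
  also have "\<dots> \<le> c * (exp \<mu> / \<mu>) * h"
    using exp_neg_series_le(2)[OF \<mu>(1) h(1,2)] c h by (intro mult_right_mono mult_left_mono) auto
  finally show ?thesis unfolding c_def E_def \<phi>_def by (simp only: times_divide_eq_right)
qed

lemma euler_discounted_payoff_error:
  fixes X :: "real \<Rightarrow> 'v::real_normed_vector" and xd :: "real \<Rightarrow> nat \<Rightarrow> 'v"
  assumes L: "0 \<le> L" and K: "0 \<le> K" and \<rho>: "L + K < \<rho>"
    and lip: "\<And>a b. a \<in> V \<Longrightarrow> b \<in> V \<Longrightarrow> norm (G a - G b) \<le> L * norm (a - b)"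
    and growth: "\<And>y. y \<in> V \<Longrightarrow> norm (G y) \<le> A + K * norm y"
    and XV: "\<And>s. 0 \<le> s \<Longrightarrow> X s \<in> V"
    and der: "\<And>s. 0 \<le> s \<Longrightarrow> (X has_vector_derivative G (X s)) (at s within {0..})"
    and X0: "X 0 = x" and xd0: "\<And>h. xd h 0 = x"
    and step: "\<And>h k. xd h (Suc k) = xd h k + h *\<^sub>R G (xd h k)"
    and xdV: "\<And>h k. 0 < h \<Longrightarrow> xd h k \<in> V"
    and LF: "0 \<le> LF" and M: "0 \<le> M"
  obtains C h0 where "0 < C" "0 < h0"
    "\<And>h F. 0 < h \<Longrightarrow> h \<le> h0 \<Longrightarrow>
      (\<And>a b. a \<in> V \<Longrightarrow> b \<in> V \<Longrightarrow> \<bar>F a - F b\<bar> \<le> LF * norm (a - b)) \<Longrightarrow>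
      (\<And>a. a \<in> V \<Longrightarrow> \<bar>F a\<bar> \<le> M) \<Longrightarrow>
      \<bar>h * (\<Sum>k. (1 - \<rho> * h)^k * F (xd h k)) - integral {0..} (\<lambda>t. F (X t) * exp (- \<rho> * t))\<bar>
        \<le> C * h"
proof -
  \<comment> \<open>Half of the gap \<open>4 \<delta>\<close> absorbs the growth of the Euler error,
    the other half is the decay rate left.\<close>
  define \<delta> where "\<delta> = (\<rho> - L - K) / 4"
  define \<mu> where "\<mu> = min (\<rho> / 2) (2 * \<delta>)"
  define C where "C = (3 * \<rho> * M + LF * (2 * (A + K * norm x) * (1 + L * (1 + 2 * L) / \<delta>))) * exp \<mu> / \<mu>"
  define h0 where "h0 = min (min 1 (1 / (2 * L + 1))) (min (\<delta> / (2 * L^2 + 1)) (1 / (2 * \<rho>)))"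
  have \<delta>: "0 < \<delta>" and \<rho>_pos: "0 < \<rho>" using \<rho> L K by (auto simp: \<delta>_def)
  then have \<mu>: "0 < \<mu>" "\<mu> \<le> \<rho> / 2" "\<mu> \<le> 2 * \<delta>" by (auto simp: \<mu>_def)
  have \<delta>_eq: "L + K + 4 * \<delta> = \<rho>" by (simp add: \<delta>_def field_simps)
  have "x \<in> V" using XV[of 0] X0 by simp
  then have "0 \<le> A + K * norm x" using growth norm_ge_zero order_trans by blast
  then have C: "0 \<le> C" unfolding C_def using L LF M \<delta> \<mu> \<rho>_pos by simp
  have "0 < 2 * L^2 + 1" by (simp add: add_nonneg_pos)
  then have h0: "0 < h0" unfolding h0_def using L \<delta> \<rho>_pos by simp
  show ?thesis
  proof (rule that[of "C + 1" h0])
    show "0 < C + 1" using C by simp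
    show "0 < h0" by (rule h0)
    fix h and F :: "'v \<Rightarrow> real"
    assume h: "0 < h" "h \<le> h0"
      and F_lip: "\<And>a b. a \<in> V \<Longrightarrow> b \<in> V \<Longrightarrow> \<bar>F a - F b\<bar> \<le> LF * norm (a - b)"
      and F_bound: "\<And>a. a \<in> V \<Longrightarrow> \<bar>F a\<bar> \<le> M"
    have "h \<le> 1" "h \<le> 1 / (2 * L + 1)" "h \<le> \<delta> / (2 * L^2 + 1)" "h \<le> 1 / (2 * \<rho>)"
      using h(2) unfolding h0_def by auto
    then have "h \<le> 1" "h * (2 * L + 1) \<le> 1" "h * (2 * L^2 + 1) \<le> \<delta>" "h * (2 * \<rho>) \<le> 1"
      using L \<rho>_pos \<open>0 < 2 * L^2 + 1\<close> by (simp_all add: field_simps)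
    then have "h \<le> 1" "h * L \<le> 1/2" "2 * h * L^2 \<le> \<delta>" "\<rho> * h \<le> 1/2"
      using h by (auto simp: algebra_simps)
    then have "\<bar>h * (\<Sum>k. (1 - \<rho> * h)^k * F (xd h k)) - integral {0..} (\<lambda>t. F (X t) * exp (- \<rho> * t))\<bar>
        \<le> (3 * \<rho> * M + LF * (2 * (A + K * norm (xd h 0)) * (1 + L * (1 + 2 * L) / \<delta>))) * exp \<mu> / \<mu> * h"
      (is "?err \<le> _")
      by (intro euler_fixed_step_payoff_error[where V = V and G = G])
        (use L K \<delta> \<delta>_eq \<mu> h lip growth XV der X0 xd0 step xdV LF F_lip F_bound in auto)
    also have "\<dots> \<le> (C + 1) * h"
      using h unfolding C_def xd0 by (simp add: algebra_simps)
    finally show "?err \<le> (C + 1) * h" .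
  qed
qed

lemma lipschitz_through_profile:
  fixes F :: "'v::real_normed_vector \<Rightarrow> (nat \<Rightarrow> 'u::real_normed_vector) \<Rightarrow> 'w::real_normed_vector"
  assumes Ls: "0 \<le> Ls"
    and phi_maps: "\<And>j y. j < N \<Longrightarrow> y \<in> V \<Longrightarrow> phi j y \<in> U j"
    and phi_lip: "\<And>j y1 y2. j < N \<Longrightarrow> y1 \<in> V \<Longrightarrow> y2 \<in> V \<Longrightarrow>
      norm (phi j y1 - phi j y2) \<le> Ls * norm (y1 - y2)"
    and F_lip: "\<And>y1 y2 u v. y1 \<in> V \<Longrightarrow> y2 \<in> V \<Longrightarrow> (\<forall>j<N. u j \<in> U j \<and> v j \<in> U j) \<Longrightarrow>
      norm (F y1 u - F y2 v) \<le> c * (norm (y1 - y2) + (\<Sum>j<N. norm (u j - v j)))"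
    and a: "a \<in> V" and b: "b \<in> V"
  shows "norm (F a (profile phi a) - F b (profile phi b)) \<le> max 0 (c * (1 + real N * Ls)) * norm (a - b)"
proof -
  define s where "s = (\<Sum>j<N. norm (profile phi a j - profile phi b j))"
  have "s \<le> of_nat (card {..<N}) * (Ls * norm (a - b))"
    unfolding s_def by (rule sum_bounded_above) (use phi_lip a b in \<open>auto simp: profile_def\<close>)
  then have s_le: "s \<le> real N * Ls * norm (a - b)" by simp
  have s_ge: "0 \<le> s" unfolding s_def by (simp add: sum_nonneg)
  have F_le: "norm (F a (profile phi a) - F b (profile phi b)) \<le> c * (norm (a - b) + s)"
    unfolding s_def using phi_maps a b by (intro F_lip) (auto simp: profile_def)
  show ?thesis
  proof (cases "0 \<le> c")
    case True
    then have "c * (norm (a - b) + s) \<le> c * (norm (a - b) + real N * Ls * norm (a - b))"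
      using s_le by (intro mult_left_mono) auto
    then have "c * (norm (a - b) + s) \<le> c * (1 + real N * Ls) * norm (a - b)"
      by (simp add: algebra_simps)
    with F_le have "norm (F a (profile phi a) - F b (profile phi b)) \<le> c * (1 + real N * Ls) * norm (a - b)"
      by (rule order_trans)
    moreover have "max 0 (c * (1 + real N * Ls)) = c * (1 + real N * Ls)" using True Ls by simp
    ultimately show ?thesis by simp
  next
    case False
    then have "c * (norm (a - b) + s) \<le> 0" using s_ge by (simp add: mult_nonpos_nonneg)
    moreover have "max 0 (c * (1 + real N * Ls)) = 0"
      using False Ls by (simp add: mult_nonpos_nonneg)
    ultimately show ?thesis using F_le by (metis mult_zero_left order_trans)
  qed
qed

lemma closed_loop_growth_bound:
  fixes g :: "'v::real_normed_vector \<Rightarrow> (nat \<Rightarrow> 'u) \<Rightarrow> 'v"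
  assumes x: "x \<in> V" and \<rho>: "0 < \<rho>"
    and phi_maps: "\<And>j y. j < N \<Longrightarrow> y \<in> V \<Longrightarrow> phi j y \<in> U j"
    and lip: "\<And>a b. a \<in> V \<Longrightarrow> b \<in> V \<Longrightarrow>
      norm (g a (profile phi a) - g b (profile phi b)) \<le> max 0 c * norm (a - b)"
    and cond: "(\<rho> > c \<and> (\<exists>B. \<forall>y u. y \<in> V \<longrightarrow> (\<forall>j<N. u j \<in> U j) \<longrightarrow> norm (g y u) \<le> B))
      \<or> (\<exists>K\<ge>0. (\<forall>y u. y \<in> V \<longrightarrow> (\<forall>j<N. u j \<in> U j) \<longrightarrow> norm (g y u) \<le> K * (1 + norm y))
               \<and> \<rho> > c + K)"
  obtains K A where "0 \<le> K" "max 0 c + K < \<rho>"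
    "\<And>y. y \<in> V \<Longrightarrow> norm (g y (profile phi y)) \<le> A + K * norm y"
proof -
  have prof: "\<forall>j<N. profile phi y j \<in> U j" if "y \<in> V" for y
    using phi_maps that by (simp add: profile_def)
  \<comment> \<open>For \<open>c \<le> 0\<close> the second alternative need not give \<open>K < \<rho>\<close>,
    but then the drift is constant.\<close>
  show ?thesis
  proof (cases "c \<le> 0")
    case True
    then have "g y (profile phi y) = g x (profile phi x)" if "y \<in> V" for y
      using lip[OF that x] by simp
    then show ?thesis using that[of 0 "norm (g x (profile phi x))"] \<rho> True by auto
  next
    case False
    from cond show ?thesis
    proof (elim disjE conjE exE)
      fix B assume "c < \<rho>" and "\<forall>y u. y \<in> V \<longrightarrow> (\<forall>j<N. u j \<in> U j) \<longrightarrow> norm (g y u) \<le> B"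
      then show ?thesis using that[of 0 B] False prof by auto
    next
      fix K assume "0 \<le> K" "c + K < \<rho>"
        and "\<forall>y u. y \<in> V \<longrightarrow> (\<forall>j<N. u j \<in> U j) \<longrightarrow> norm (g y u) \<le> K * (1 + norm y)"
      then show ?thesis using that[of K K] False prof by (auto simp: algebra_simps)
    qed
  qed
qed

lemma traj_is_solution:
  assumes "has_unique_solution V g phi x0"
  shows "is_solution V g phi x0 (traj V g phi x0)"
  using assms unfolding has_unique_solution_def traj_def by (metis someI_ex)

lemma is_solution_ode:
  assumes sol: "is_solution V g phi x0 X"
  shows "X 0 = x0" and "\<And>s. 0 \<le> s \<Longrightarrow> X s \<in> V"
    and "\<And>s. continuous_on V (\<lambda>y. g y (profile phi y)) \<Longrightarrow> 0 \<le> s \<Longrightarrow>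
      (X has_vector_derivative g (X s) (profile phi (X s))) (at s within {0..})"
proof -
  define G where "G = (\<lambda>y. g y (profile phi y))"
  have XV: "X t \<in> V" and X_eq: "X t = x0 + integral {0..t} (\<lambda>r. G (X r))"
    and GX_int: "(\<lambda>r. G (X r)) integrable_on {0..t}" if "0 \<le> t" for t
    using sol that unfolding is_solution_def G_def absolutely_integrable_on_def by auto
  show "X 0 = x0" using X_eq[of 0] by simp
  show "X s \<in> V" if "0 \<le> s" for s using XV that .
  fix s :: real assume cont: "continuous_on V (\<lambda>y. g y (profile phi y))" and s: "0 \<le> s"
  define T where "T = s + 1"
  have "continuous_on {0..T} (\<lambda>t. x0 + integral {0..t} (\<lambda>r. G (X r)))"
    using s by (intro continuous_intros indefinite_integral_continuous_1 GX_int) (simp add: T_def)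
  then have "continuous_on {0..T} X"
    by (rule continuous_on_eq) (use X_eq in auto)
  then have "continuous_on {0..T} (\<lambda>r. G (X r))"
    by (rule continuous_on_compose2[OF cont[folded G_def]]) (use XV in auto)
  then have "((\<lambda>t. x0 + integral {0..t} (\<lambda>r. G (X r))) has_vector_derivative G (X s)) (at s within {0..T})"
    using s by (auto intro!: derivative_eq_intros integral_has_vector_derivative simp: T_def)
  then have "(X has_vector_derivative G (X s)) (at s within {0..T})"
    by (rule has_vector_derivative_transform[rotated 2]) (use s X_eq in \<open>auto simp: T_def\<close>)
  moreover have "at s within {0..T} = at s within {0..}"
    by (rule at_within_nhd[where S = "{..<T}"]) (auto simp: T_def)
  ultimately show "(X has_vector_derivative g (X s) (profile phi (X s))) (at s within {0..})"
    unfolding G_def by simp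
qed

theorem proposition2:
  fixes V :: "'v::euclidean_space set"
    and U :: "nat \<Rightarrow> 'u::euclidean_space set"
    and N :: nat
    and g :: "'v \<Rightarrow> (nat \<Rightarrow> 'u) \<Rightarrow> 'v"
    and f :: "nat \<Rightarrow> 'v \<Rightarrow> (nat \<Rightarrow> 'u) \<Rightarrow> real"
    and \<rho> :: real
    and phi :: "nat \<Rightarrow> 'v \<Rightarrow> 'u"
    and x :: 'v
    and Lg M Ls :: real
    and L :: "nat \<Rightarrow> real"
  assumes rho_pos: "\<rho> > 0"
    and x_in: "x \<in> V"
    \<comment> \<open>admissibility of the strategy tuple (phi_1,...,phi_N)\<close>
    and phi_maps: "\<And>j y. j < N \<Longrightarrow> y \<in> V \<Longrightarrow> phi j y \<in> U j"
    and phi_meas: "\<And>j. j < N \<Longrightarrow> phi j \<in> borel_measurable (restrict_space borel V)"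
    and admissible: "\<And>x0. x0 \<in> V \<Longrightarrow> has_unique_solution V g phi x0"
    and disc_in: "\<And>h x0 n. h > 0 \<Longrightarrow> x0 \<in> V \<Longrightarrow> disc_traj g phi h x0 n \<in> V"
    \<comment> \<open>H1\<close>
    and H1: "\<And>y1 y2 u v. y1 \<in> V \<Longrightarrow> y2 \<in> V \<Longrightarrow> (\<forall>j<N. u j \<in> U j \<and> v j \<in> U j) \<Longrightarrow>
              norm (g y1 u - g y2 v) \<le> Lg * (norm (y1 - y2) + (\<Sum>j<N. norm (u j - v j)))"
    \<comment> \<open>H2\<close>
    and H2: "\<And>i y1 y2 u v. i < N \<Longrightarrow> y1 \<in> V \<Longrightarrow> y2 \<in> V \<Longrightarrow> (\<forall>j<N. u j \<in> U j \<and> v j \<in> U j) \<Longrightarrow>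
              \<bar>f i y1 u - f i y2 v\<bar> \<le> L i * (norm (y1 - y2) + (\<Sum>j<N. norm (u j - v j)))"
    \<comment> \<open>H3\<close>
    and H3: "\<And>i y u. i < N \<Longrightarrow> y \<in> V \<Longrightarrow> (\<forall>j<N. u j \<in> U j) \<Longrightarrow> \<bar>f i y u\<bar> \<le> M"
    \<comment> \<open>Lipschitz strategies\<close>
    and Ls_pos: "Ls > 0"
    and phi_lip: "\<And>j y1 y2. j < N \<Longrightarrow> y1 \<in> V \<Longrightarrow> y2 \<in> V \<Longrightarrow>
              norm (phi j y1 - phi j y2) \<le> Ls * norm (y1 - y2)"
    \<comment> \<open>the alternative growth / discount conditions, with L = Lg (1 + N Ls)\<close>
    and cond: "(\<rho> > Lg * (1 + real N * Ls) \<and>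
                 (\<exists>B. \<forall>y u. y \<in> V \<longrightarrow> (\<forall>j<N. u j \<in> U j) \<longrightarrow> norm (g y u) \<le> B))
             \<or> (\<exists>K\<ge>0. (\<forall>y u. y \<in> V \<longrightarrow> (\<forall>j<N. u j \<in> U j) \<longrightarrow> norm (g y u) \<le> K * (1 + norm y))
                      \<and> \<rho> > Lg * (1 + real N * Ls) + K)"
  shows "\<exists>C>0. \<exists>h0>0. \<forall>h. 0 < h \<and> h \<le> h0 \<longrightarrow>
           (\<forall>i<N. \<bar>W_disc g f \<rho> h phi i x - W V g f \<rho> phi i x\<bar> \<le> C * h)"
proof -
  define G where "G = (\<lambda>y. g y (profile phi y))"
  define X where "X = traj V g phi x"
  define LF where "LF = (\<Sum>i<N. max 0 (L i * (1 + real N * Ls)))"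
  have G_lip: "norm (G a - G b) \<le> max 0 (Lg * (1 + real N * Ls)) * norm (a - b)"
    if "a \<in> V" "b \<in> V" for a b
    unfolding G_def using lipschitz_through_profile[where F = g, OF _ phi_maps phi_lip H1] Ls_pos that by simp
  obtain K A where K: "0 \<le> K" "max 0 (Lg * (1 + real N * Ls)) + K < \<rho>"
    and growth: "\<And>y. y \<in> V \<Longrightarrow> norm (G y) \<le> A + K * norm y"
    unfolding G_def by (rule closed_loop_growth_bound[OF x_in rho_pos phi_maps _ cond])
      (auto intro: G_lip[unfolded G_def])
  have G_cont: "continuous_on V G"
    using G_lip by (intro lipschitz_on_continuous_on[of "max 0 (Lg * (1 + real N * Ls))"] lipschitz_onI)
      (auto simp: dist_norm)
  note X_ode = is_solution_ode[OF traj_is_solution[OF admissible[OF x_in]], folded X_def]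
  obtain C h0 where "0 < C" "0 < h0"
    and err: "\<And>h F. 0 < h \<Longrightarrow> h \<le> h0 \<Longrightarrow>
      (\<And>a b. a \<in> V \<Longrightarrow> b \<in> V \<Longrightarrow> \<bar>F a - F b\<bar> \<le> LF * norm (a - b)) \<Longrightarrow>
      (\<And>a. a \<in> V \<Longrightarrow> \<bar>F a\<bar> \<le> \<bar>M\<bar>) \<Longrightarrow>
      \<bar>h * (\<Sum>k. (1 - \<rho> * h)^k * F (disc_traj g phi h x k))
        - integral {0..} (\<lambda>t. F (X t) * exp (- \<rho> * t))\<bar> \<le> C * h"
    by (rule euler_discounted_payoff_error[where V = V and G = G and X = X and xd = "\<lambda>h. disc_traj g phi h x"
          and LF = LF and M = "\<bar>M\<bar>"])
      (use K G_lip growth X_ode G_cont[unfolded G_def] disc_in x_in in \<open>auto simp: G_def LF_def sum_nonneg\<close>)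
  have F_lip: "\<bar>f i a (profile phi a) - f i b (profile phi b)\<bar> \<le> LF * norm (a - b)"
    if "i < N" "a \<in> V" "b \<in> V" for i a b
  proof -
    have "norm (f i a (profile phi a) - f i b (profile phi b)) \<le> max 0 (L i * (1 + real N * Ls)) * norm (a - b)"
      using lipschitz_through_profile[where F = "f i", OF _ phi_maps phi_lip] H2[OF \<open>i < N\<close>] Ls_pos that
      by simp
    also have "\<dots> \<le> LF * norm (a - b)"
      unfolding LF_def using \<open>i < N\<close> by (intro mult_right_mono member_le_sum) auto
    finally show ?thesis by simp
  qed
  have F_bound: "\<bar>f i a (profile phi a)\<bar> \<le> \<bar>M\<bar>" if "i < N" "a \<in> V" for i a
    using H3[OF that] phi_maps that by (auto simp: profile_def intro: order_trans[OF _ abs_ge_self])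
  have "\<forall>h. 0 < h \<and> h \<le> h0 \<longrightarrow> (\<forall>i<N. \<bar>W_disc g f \<rho> h phi i x - W V g f \<rho> phi i x\<bar> \<le> C * h)"
  proof (intro allI impI)
    fix h i assume h: "0 < h \<and> h \<le> h0" and i: "i < N"
    show "\<bar>W_disc g f \<rho> h phi i x - W V g f \<rho> phi i x\<bar> \<le> C * h"
      unfolding W_disc_def W_def X_def[symmetric]
      by (rule err[of h "\<lambda>y. f i y (profile phi y)"]) (use h F_lip[OF i] F_bound[OF i] in auto)
  qed
  with \<open>0 < C\<close> \<open>0 < h0\<close> show ?thesis by blast
qed

end
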